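(* Let $q'>0$, $e'\in(0,1)$, $q_{\max}>0$, $\mathcal D_3=\{(\omega,\omega'):0\le\omega\le\pi/2,\ 0\le\omega'\le\pi\}$, $\mathcal D_4=\{(q,e):0<q\le q_{\max},\ 0\le e\le1\}$. For each $(q,e)\in\mathcal D_4$, $$\min_{(\omega,\omega')\in\mathcal D_3}\delta_{\rm nod}=\max\{0,\ \ell^e_{\rm int},\ \ell^e_{\rm ext}\},\qquad \max_{(\omega,\omega')\in\mathcal D_3}\delta_{\rm nod}=\max\{u^e_{\rm link},\ |p'-q(1+e)|\},$$ where $\ell^e_{\rm int}(q,e)=q'-\frac{q(1+e)}{1-e}$ (with $\ell^e_{\rm int}(q,1)=-\infty$), $\ell^e_{\rm ext}(q,e)=q-Q'$, and $u^e_{\rm link}(q,e)=\min\{\frac{q(1+e)}{1-e}-q',\ Q'-q\}$ (with $u^e_{\rm link}(q,1)=Q'-q$).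
   Context: For $q>0$, $e\in[0,1]$ and angles $\omega,\omega'$, define $r_{\pm}=\frac{q(1+e)}{1\pm e\cos\omega}$, $r'_{\pm}=\frac{q'(1+e')}{1\pm e'\cos\omega'}$ (extended-real values allowed), $d^+=r'_+-r_+$, $d^-=r'_--r_-$, and the nodal distance $\delta_{\rm nod}=\min\{|d^+|,|d^-|\}$. $p'=q'(1+e')$, $Q'=\frac{q'(1+e')}{1-e'}$. *)

theory Defs
  imports "HOL-Library.Extended_Real" Complex_Main
begin

text \<open>Radial distances at the nodes, r_plus = q(1+e)/(1 + e cos w), r_minus = q(1+e)/(1 - e cos w),
  as extended reals: a vanishing denominator (only possible for e = 1) gives +infinity.\<close>
definition r_plus :: "real \<Rightarrow> real \<Rightarrow> real \<Rightarrow> ereal" where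
  "r_plus q e w = (if 1 + e * cos w = 0 then \<infinity> else ereal (q * (1 + e) / (1 + e * cos w)))"

definition r_minus :: "real \<Rightarrow> real \<Rightarrow> real \<Rightarrow> ereal" where
  "r_minus q e w = (if 1 - e * cos w = 0 then \<infinity> else ereal (q * (1 + e) / (1 - e * cos w)))"

definition d_plus :: "real \<Rightarrow> real \<Rightarrow> real \<Rightarrow> real \<Rightarrow> real \<Rightarrow> real \<Rightarrow> ereal" where
  "d_plus q e w q' e' w' = r_plus q' e' w' - r_plus q e w"

definition d_minus :: "real \<Rightarrow> real \<Rightarrow> real \<Rightarrow> real \<Rightarrow> real \<Rightarrow> real \<Rightarrow> ereal" where
  "d_minus q e w q' e' w' = r_minus q' e' w' - r_minus q e w"

definition delta_nod :: "real \<Rightarrow> real \<Rightarrow> real \<Rightarrow> real \<Rightarrow> real \<Rightarrow> real \<Rightarrow> ereal" where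
  "delta_nod q e w q' e' w' = min \<bar>d_plus q e w q' e' w'\<bar> \<bar>d_minus q e w q' e' w'\<bar>"

definition p_prime :: "real \<Rightarrow> real \<Rightarrow> real" where
  "p_prime q' e' = q' * (1 + e')"

definition Q_prime :: "real \<Rightarrow> real \<Rightarrow> real" where
  "Q_prime q' e' = q' * (1 + e') / (1 - e')"

definition l_int :: "real \<Rightarrow> real \<Rightarrow> real \<Rightarrow> real \<Rightarrow> ereal" where
  "l_int q e q' e' = (if e = 1 then -\<infinity> else ereal (q' - q * (1 + e) / (1 - e)))"

definition l_ext :: "real \<Rightarrow> real \<Rightarrow> real \<Rightarrow> real \<Rightarrow> real" where
  "l_ext q e q' e' = q - Q_prime q' e'"

definition u_link :: "real \<Rightarrow> real \<Rightarrow> real \<Rightarrow> real \<Rightarrow> real" where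
  "u_link q e q' e' = (if e = 1 then Q_prime q' e' - q
     else min (q * (1 + e) / (1 - e) - q') (Q_prime q' e' - q))"

end

theory Submission
  imports Defs
begin

text \<open>For \<open>0 \<le> \<omega> \<le> \<pi>/2\<close> the nodal distances \<open>x = r\<^sub>+ \<in> [q, p]\<close> and \<open>y = r\<^sub>- \<in> [p, Q]\<close> of the
  first orbit have harmonic mean its parameter \<open>p = q(1+e)\<close>, and likewise \<open>x', y' \<in> [q', Q']\<close> have
  harmonic mean \<open>p'\<close>. The lower bound is interval separation; it is attained at \<open>(0, \<pi>)\<close> when the
  radial ranges are disjoint and otherwise at a common nodal radius, where \<open>delta_nod = 0\<close>. For the
  upper bound, if both nodal distances move the same way, superadditivity of the harmonic mean,
  \<open>H(x + t, y + t) \<ge> H(x, y) + t\<close>, gives \<open>min(|x' - x|, |y' - y|) \<le> |p' - p|\<close>; if they move in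
  opposite directions, the radial ranges bound the displacement by \<open>u_link\<close>. The maximum is attained
  at \<open>(\<pi>/2, \<pi>/2)\<close> or at \<open>(0, \<pi>)\<close>.\<close>

definition harm_mean :: "real \<Rightarrow> real \<Rightarrow> real" where
  "harm_mean x y = 2 * x * y / (x + y)"

lemma harm_mean_mono:
  assumes "0 < x" "x \<le> x'" "0 < y" "y \<le> y'"
  shows "harm_mean x y \<le> harm_mean x' y'"
proof -
  have "x * y * x' \<le> x * y' * x'" "x * y * y' \<le> x' * y * y'"
    using assms by (simp_all add: mult_left_mono mult_right_mono)
  then have "2 * x * y * (x' + y') \<le> 2 * x' * y' * (x + y)"
    by (simp add: algebra_simps)
  then show ?thesis
    using assms by (simp add: harm_mean_def divide_simps)
qed

lemma harm_mean_shift: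
  assumes "0 < x" "0 < y" "0 \<le> t"
  shows "harm_mean x y + t \<le> harm_mean (x + t) (y + t)"
proof -
  have "2 * (x + t) * (y + t) * (x + y) - (2 * x * y + t * (x + y)) * (x + y + 2 * t)
      = t * (x - y)\<^sup>2"
    by (simp add: algebra_simps power2_eq_square)
  moreover have "0 \<le> t * (x - y)\<^sup>2"
    using assms by simp
  ultimately have "(2 * x * y + t * (x + y)) * (x + y + 2 * t) \<le> 2 * (x + t) * (y + t) * (x + y)"
    by linarith
  then show ?thesis
    using assms by (simp add: harm_mean_def divide_simps add_ac)
qed

lemma harm_mean_increment:
  assumes "0 < x" "x \<le> x'" "0 < y" "y \<le> y'"
  shows "min (x' - x) (y' - y) \<le> harm_mean x' y' - harm_mean x y"
proof -
  define t where "t = min (x' - x) (y' - y)"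
  have "harm_mean x y + t \<le> harm_mean (x + t) (y + t)"
    using assms by (intro harm_mean_shift) (auto simp: t_def)
  also have "\<dots> \<le> harm_mean x' y'"
    using assms by (intro harm_mean_mono) (auto simp: t_def)
  finally show ?thesis
    by (simp add: t_def)
qed

lemma min_displacement_bounds:
  assumes "0 < q" "q \<le> x" "x \<le> p" "p \<le> y" "harm_mean x y = p"
    and "0 < q'" "q' \<le> x'" "x' \<le> Q'" "q' \<le> y'" "y' \<le> Q'" "harm_mean x' y' = p'"
  shows "max 0 (max (q' - y) (q - Q')) \<le> min \<bar>x' - x\<bar> \<bar>y' - y\<bar>"
    and "min \<bar>x' - x\<bar> \<bar>y' - y\<bar> \<le> max (min (y - q') (Q' - q)) \<bar>p' - p\<bar>"
proof -
  show "max 0 (max (q' - y) (q - Q')) \<le> min \<bar>x' - x\<bar> \<bar>y' - y\<bar>"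
    using assms abs_ge_self[of "x' - x"] abs_ge_minus_self[of "x' - x"]
      abs_ge_self[of "y' - y"] abs_ge_minus_self[of "y' - y"]
    by simp
  consider "x \<le> x'" "y \<le> y'" | "x' \<le> x" "y' \<le> y" | "x \<le> x'" "y' \<le> y" | "x' \<le> x" "y \<le> y'"
    by linarith
  then show "min \<bar>x' - x\<bar> \<bar>y' - y\<bar> \<le> max (min (y - q') (Q' - q)) \<bar>p' - p\<bar>"
  proof cases
    case 1
    then have "min (x' - x) (y' - y) \<le> p' - p"
      using harm_mean_increment[of x x' y y'] assms by simp
    with 1 show ?thesis
      by auto
  next
    case 2
    then have "min (x - x') (y - y') \<le> p - p'"
      using harm_mean_increment[of x' x y' y] assms by simp
    with 2 show ?thesis
      by auto
  qed (use assms in auto)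
qed

definition conic_radius :: "real \<Rightarrow> real \<Rightarrow> real \<Rightarrow> real" where
  "conic_radius q e c = q * (1 + e) / (1 + e * c)"

lemma harm_mean_conic_radius:
  assumes "1 + e * c \<noteq> 0" "1 - e * c \<noteq> 0"
  shows "harm_mean (conic_radius q e c) (conic_radius q e (- c)) = q * (1 + e)"
proof -
  define p where "p = q * (1 + e)"
  have sum: "conic_radius q e c + conic_radius q e (- c) = p * (2 / ((1 + e * c) * (1 - e * c)))"
    using assms by (simp add: conic_radius_def p_def field_simps)
  have "2 * conic_radius q e c * conic_radius q e (- c) = p * (p * (2 / ((1 + e * c) * (1 - e * c))))"
    using assms by (simp add: conic_radius_def p_def field_simps)
  then show ?thesis
    using assms unfolding harm_mean_def sum p_def[symmetric] by (cases "p = 0") auto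
qed

lemma conic_radius_antimono:
  assumes "0 \<le> q" "0 \<le> e" "0 < 1 + e * c" "c \<le> d"
  shows "conic_radius q e d \<le> conic_radius q e c"
proof -
  have "1 + e * c \<le> 1 + e * d"
    using assms by (simp add: mult_left_mono)
  then show ?thesis
    unfolding conic_radius_def using assms by (intro divide_left_mono) auto
qed

lemma one_plus_mult_pos:
  fixes e c :: real
  assumes "0 \<le> e" "e < 1" "-1 \<le> c"
  shows "0 < 1 + e * c"
  using assms mult_left_mono[of "-1" c e] by simp

lemma conic_radius_bounds:
  assumes "0 \<le> q" "0 \<le> e" "e < 1" "-1 \<le> c" "c \<le> 1"
  shows "q \<le> conic_radius q e c" "conic_radius q e c \<le> q * (1 + e) / (1 - e)"
proof -
  have "0 < 1 + e * c"
    using assms by (simp add: one_plus_mult_pos)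
  then have "conic_radius q e 1 \<le> conic_radius q e c"
    using assms by (intro conic_radius_antimono) auto
  then show "q \<le> conic_radius q e c"
    using assms by (simp add: conic_radius_def)
  have "conic_radius q e c \<le> conic_radius q e (-1)"
    using assms by (intro conic_radius_antimono) auto
  then show "conic_radius q e c \<le> q * (1 + e) / (1 - e)"
    by (simp add: conic_radius_def)
qed

lemma conic_radius_surj:
  assumes "0 < q" "0 \<le> e" "q \<le> z" "(1 - e) * z \<le> q * (1 + e)"
  obtains c where "-1 \<le> c" "c \<le> 1" "0 < 1 + e * c" "conic_radius q e c = z"
    "z \<le> q * (1 + e) \<Longrightarrow> 0 \<le> c" "q * (1 + e) \<le> z \<Longrightarrow> c \<le> 0"
proof (cases "e = 0")
  case True
  then have "z = q"
    using assms by simp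
  with True show ?thesis
    by (intro that[of 0]) (simp_all add: conic_radius_def)
next
  case False
  define a where "a = q * (1 + e) / z"
  have "0 < z" "0 < e"
    using assms False by auto
  then have a: "1 - e \<le> a" "a \<le> 1 + e" "0 < a"
    using assms by (simp_all add: a_def divide_simps mult.commute)
  show ?thesis
  proof (rule that[of "(a - 1) / e"])
    have ec: "1 + e * ((a - 1) / e) = a"
      using \<open>0 < e\<close> by simp
    show "0 < 1 + e * ((a - 1) / e)" "conic_radius q e ((a - 1) / e) = z"
      using a assms \<open>0 < z\<close> by (simp_all only: ec conic_radius_def) (simp add: a_def)
    show "-1 \<le> (a - 1) / e" "(a - 1) / e \<le> 1"
      using a \<open>0 < e\<close> by (simp_all add: divide_simps)
    show "0 \<le> (a - 1) / e" if "z \<le> q * (1 + e)"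
      using that \<open>0 < e\<close> \<open>0 < z\<close> by (simp add: a_def divide_simps)
    show "(a - 1) / e \<le> 0" if "q * (1 + e) \<le> z"
      using that \<open>0 < e\<close> \<open>0 < z\<close> by (simp add: a_def divide_simps)
  qed
qed

lemma r_plus_conic_radius:
  "1 + e * cos w \<noteq> 0 \<Longrightarrow> r_plus q e w = ereal (conic_radius q e (cos w))"
  by (simp add: r_plus_def conic_radius_def)

lemma r_minus_conic_radius:
  "1 - e * cos w \<noteq> 0 \<Longrightarrow> r_minus q e w = ereal (conic_radius q e (- cos w))"
  by (simp add: r_minus_def conic_radius_def)

lemma delta_nod_conic_radius:
  assumes "1 + e * cos w \<noteq> 0" "1 - e * cos w \<noteq> 0" "1 + e' * cos w' \<noteq> 0" "1 - e' * cos w' \<noteq> 0"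
  shows "delta_nod q e w q' e' w' = ereal (min
    \<bar>conic_radius q' e' (cos w') - conic_radius q e (cos w)\<bar>
    \<bar>conic_radius q' e' (- cos w') - conic_radius q e (- cos w)\<bar>)"
  using assms by (simp add: delta_nod_def d_plus_def d_minus_def r_plus_conic_radius r_minus_conic_radius min_def)

lemma delta_nod_r_minus_infinite:
  assumes "1 + e * cos w \<noteq> 0" "1 - e * cos w = 0" "1 + e' * cos w' \<noteq> 0"
  shows "delta_nod q e w q' e' w' = ereal \<bar>conic_radius q' e' (cos w') - conic_radius q e (cos w)\<bar>"
  using assms by (simp add: delta_nod_def d_plus_def d_minus_def r_plus_conic_radius r_minus_def)

definition lower_nodal_bound :: "real \<Rightarrow> real \<Rightarrow> real \<Rightarrow> real \<Rightarrow> real" where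
  "lower_nodal_bound q e q' e' = (if e = 1 then max 0 (q - Q_prime q' e')
     else max 0 (max (q' - q * (1 + e) / (1 - e)) (q - Q_prime q' e')))"

lemma max_l_int_l_ext_eq:
  "max 0 (max (l_int q e q' e') (ereal (l_ext q e q' e'))) = ereal (lower_nodal_bound q e q' e')"
  by (simp add: l_int_def l_ext_def lower_nodal_bound_def max_def zero_ereal_def)

lemma conic_radius_gap_bounds:
  fixes q e q' e' c c' :: real
  defines "m \<equiv> min \<bar>conic_radius q' e' c' - conic_radius q e c\<bar>
    \<bar>conic_radius q' e' (- c') - conic_radius q e (- c)\<bar>"
  assumes "0 < q'" "0 < e'" "e' < 1" "0 < q" "0 \<le> e" "e \<le> 1"
    and "0 \<le> c" "c \<le> 1" "e * c < 1" "-1 \<le> c'" "c' \<le> 1"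
  shows "lower_nodal_bound q e q' e' \<le> m \<and> m \<le> max (u_link q e q' e') \<bar>p_prime q' e' - q * (1 + e)\<bar>"
proof -
  define x y x' y' where "x = conic_radius q e c" and "y = conic_radius q e (- c)"
    and "x' = conic_radius q' e' c'" and "y' = conic_radius q' e' (- c')"
  define p p' Q' Q where "p = q * (1 + e)" and "p' = p_prime q' e'" and "Q' = Q_prime q' e'"
    and "Q = q * (1 + e) / (1 - e)"
  have m: "m = min \<bar>x' - x\<bar> \<bar>y' - y\<bar>"
    by (simp add: m_def x_def y_def x'_def y'_def)
  have harm': "harm_mean x' y' = p'"
    using harm_mean_conic_radius one_plus_mult_pos[of e' c'] one_plus_mult_pos[of e' "- c'"] assms
    by (simp add: x'_def y'_def p'_def p_prime_def)
  have primed: "q' \<le> x'" "x' \<le> Q'" "q' \<le> y'" "y' \<le> Q'"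
    using conic_radius_bounds[of q' e' c'] conic_radius_bounds[of q' e' "- c'"] assms
    by (simp_all add: x'_def y'_def Q'_def Q_prime_def)
  have "0 < 1 + e * c"
    using assms by (simp add: add_pos_nonneg)
  then have harm: "harm_mean x y = p"
    using harm_mean_conic_radius[of e c q] assms by (simp add: x_def y_def p_def)
  have "conic_radius q e 1 \<le> x" "x \<le> conic_radius q e 0" "conic_radius q e 0 \<le> y"
    using assms \<open>0 < 1 + e * c\<close> unfolding x_def y_def by (auto intro!: conic_radius_antimono)
  then have x: "q \<le> x" "x \<le> p" and "p \<le> y"
    using assms by (simp_all add: conic_radius_def p_def)
  note lo = min_displacement_bounds(1)[OF \<open>0 < q\<close> x \<open>p \<le> y\<close> harm \<open>0 < q'\<close> primed harm', folded m]
   and up = min_displacement_bounds(2)[OF \<open>0 < q\<close> x \<open>p \<le> y\<close> harm \<open>0 < q'\<close> primed harm', folded m]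
  show ?thesis
  proof (cases "e = 1")
    case True
    have "max 0 (q - Q') \<le> m" "m \<le> max (Q' - q) \<bar>p' - p\<bar>"
      using lo up by (auto simp: le_max_iff_disj min_le_iff_disj)
    with True show ?thesis
      by (simp add: lower_nodal_bound_def u_link_def p_def p'_def Q'_def)
  next
    case False
    then have "y \<le> Q"
      using conic_radius_bounds[of q e "- c"] assms by (simp add: y_def Q_def)
    then have "max 0 (max (q' - Q) (q - Q')) \<le> m" "m \<le> max (min (Q - q') (Q' - q)) \<bar>p' - p\<bar>"
      using lo up by (auto simp: le_max_iff_disj min_le_iff_disj)
    with False show ?thesis
      by (simp add: lower_nodal_bound_def u_link_def p_def p'_def Q_def Q'_def)
  qed
qed

lemma conic_radius_gap_bounds_parabolic:
  assumes "0 < q'" "0 < e'" "e' < 1" "0 < q" "-1 \<le> c'" "c' \<le> 1"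
  shows "lower_nodal_bound q 1 q' e' \<le> \<bar>conic_radius q' e' c' - q\<bar> \<and>
    \<bar>conic_radius q' e' c' - q\<bar> \<le> max (u_link q 1 q' e') \<bar>p_prime q' e' - q * 2\<bar>"
proof -
  have "q' \<le> conic_radius q' e' c'" "conic_radius q' e' c' \<le> Q_prime q' e'"
    using conic_radius_bounds[of q' e' c'] assms by (simp_all add: Q_prime_def)
  moreover have "p_prime q' e' \<le> 2 * q'"
    using assms by (simp add: p_prime_def)
  ultimately show ?thesis
    by (auto simp: lower_nodal_bound_def u_link_def)
qed

lemma delta_nod_bounds:
  assumes "0 < q'" "0 < e'" "e' < 1" "0 < q" "0 \<le> e" "e \<le> 1"
    and "0 \<le> w" "w \<le> pi / 2" "0 \<le> w'" "w' \<le> pi"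
  shows "max 0 (max (l_int q e q' e') (ereal (l_ext q e q' e'))) \<le> delta_nod q e w q' e' w' \<and>
    delta_nod q e w q' e' w' \<le> ereal (max (u_link q e q' e') \<bar>p_prime q' e' - q * (1 + e)\<bar>)"
proof -
  have c: "0 \<le> cos w" "cos w \<le> 1" "-1 \<le> cos w'" "cos w' \<le> 1"
    using assms by (auto intro: cos_ge_zero)
  have c': "1 + e' * cos w' \<noteq> 0" "1 - e' * cos w' \<noteq> 0"
    using one_plus_mult_pos[of e' "cos w'"] one_plus_mult_pos[of e' "- cos w'"] assms c by auto
  have ec: "e * cos w \<le> e" "e * cos w \<le> cos w"
    using assms c by (simp_all add: mult_left_le mult_left_le_one_le)
  show ?thesis
  proof (cases "e * cos w = 1")
    case True
    then have "e = 1" "cos w = 1"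
      using ec assms c by linarith+
    then show ?thesis
      using delta_nod_r_minus_infinite[of e w e' w' q q'] conic_radius_gap_bounds_parabolic[of q' e' q "cos w'"]
        assms c c'
      by (simp add: max_l_int_l_ext_eq conic_radius_def del: ereal_max)
  next
    case False
    then have "e * cos w < 1"
      using ec assms by linarith
    moreover have "0 < 1 + e * cos w"
      using assms c by (simp add: add_pos_nonneg)
    ultimately have "delta_nod q e w q' e' w' = ereal (min
        \<bar>conic_radius q' e' (cos w') - conic_radius q e (cos w)\<bar>
        \<bar>conic_radius q' e' (- cos w') - conic_radius q e (- cos w)\<bar>)"
      using delta_nod_conic_radius c' by simp
    then show ?thesis
      using conic_radius_gap_bounds[of q' e' q e "cos w" "cos w'"] \<open>e * cos w < 1\<close> assms c
      by (simp only: max_l_int_l_ext_eq ereal_less_eq(3))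
  qed
qed

lemma delta_nod_0_pi:
  assumes "0 \<le> e" "e \<le> 1" "0 \<le> e'" "e' < 1"
  shows "delta_nod q e 0 q' e' pi = ereal (if e = 1 then \<bar>Q_prime q' e' - q\<bar>
    else min \<bar>Q_prime q' e' - q\<bar> \<bar>q' - q * (1 + e) / (1 - e)\<bar>)"
proof (cases "e = 1")
  case True
  then show ?thesis
    using delta_nod_r_minus_infinite[of e 0 e' pi q q'] assms
    by (simp add: conic_radius_def Q_prime_def)
next
  case False
  then show ?thesis
    using delta_nod_conic_radius[of e 0 e' pi q q'] assms
    by (simp add: conic_radius_def Q_prime_def)
qed

lemma delta_nod_pi_half:
  "delta_nod q e (pi / 2) q' e' (pi / 2) = ereal \<bar>p_prime q' e' - q * (1 + e)\<bar>"
  by (simp add: delta_nod_def d_plus_def d_minus_def r_plus_def r_minus_def p_prime_def)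

lemma delta_nod_zero_attained:
  assumes "0 < q'" "0 < e'" "e' < 1" "0 < q" "0 \<le> e" "e \<le> 1"
    and "q \<le> Q_prime q' e'" "e \<noteq> 1 \<Longrightarrow> q' \<le> q * (1 + e) / (1 - e)"
  obtains w w' where "0 \<le> w" "w \<le> pi / 2" "0 \<le> w'" "w' \<le> pi" "delta_nod q e w q' e' w' = 0"
proof -
  \<comment> \<open>a radius lying in both radial ranges \<open>[q, Q]\<close> and \<open>[q', Q']\<close>\<close>
  define z where "z = max q q'"
  have "q' \<le> Q_prime q' e'"
    using conic_radius_bounds[of q' e' 1] assms by (simp add: Q_prime_def)
  then have "z \<le> Q_prime q' e'"
    using assms by (simp add: z_def)
  then have "(1 - e') * z \<le> q' * (1 + e')"
    using assms by (simp add: Q_prime_def le_divide_eq mult.commute)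
  then obtain c' where c': "-1 \<le> c'" "c' \<le> 1" "0 < 1 + e' * c'" "conic_radius q' e' c' = z"
    using conic_radius_surj[of q' e' z] assms by (auto simp: z_def)
  have "(1 - e) * z \<le> q * (1 + e)"
  proof (cases "e = 1")
    case False
    have "q \<le> q * (1 + e) / (1 - e)"
      using conic_radius_bounds[of q e 1] assms False by simp
    then have "z \<le> q * (1 + e) / (1 - e)"
      using assms False by (simp add: z_def)
    then show ?thesis
      using assms False by (simp add: le_divide_eq mult.commute)
  qed (use assms in simp)
  then obtain c where c: "-1 \<le> c" "c \<le> 1" "0 < 1 + e * c" "conic_radius q e c = z"
    "z \<le> q * (1 + e) \<Longrightarrow> 0 \<le> c" "q * (1 + e) \<le> z \<Longrightarrow> c \<le> 0"
    using conic_radius_surj[of q e z] assms by (auto simp: z_def)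
  show ?thesis
  proof (cases "z \<le> q * (1 + e)")
    case True
    then have "r_plus q e (arccos c) = ereal z" "r_plus q' e' (arccos c') = ereal z"
      using c c' by (simp_all add: r_plus_conic_radius)
    then show ?thesis
      using c c' True arccos_le_pi2[of c] arccos_bounded[of c] arccos_bounded[of c']
      by (intro that[of "arccos c" "arccos c'"]) (simp_all add: delta_nod_def d_plus_def)
  next
    case False
    then have "r_minus q e (arccos (- c)) = ereal z" "r_minus q' e' (arccos (- c')) = ereal z"
      using c c' by (simp_all add: r_minus_conic_radius)
    then show ?thesis
      using c c' False arccos_le_pi2[of "- c"] arccos_bounded[of "- c"] arccos_bounded[of "- c'"]
      by (intro that[of "arccos (- c)" "arccos (- c')"]) (simp_all add: delta_nod_def d_minus_def)
  qed
qed

lemma delta_nod_max_attained: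
  assumes "0 < q'" "0 < e'" "e' < 1" "0 < q" "0 \<le> e" "e \<le> 1"
  obtains w w' where "0 \<le> w" "w \<le> pi / 2" "0 \<le> w'" "w' \<le> pi"
    "delta_nod q e w q' e' w' = ereal (max (u_link q e q' e') \<bar>p_prime q' e' - q * (1 + e)\<bar>)"
proof (cases "u_link q e q' e' \<le> \<bar>p_prime q' e' - q * (1 + e)\<bar>")
  case True
  then show ?thesis
    using delta_nod_pi_half by (intro that[of "pi / 2" "pi / 2"]) auto
next
  case False
  then have "delta_nod q e 0 q' e' pi = ereal (u_link q e q' e')"
    using delta_nod_0_pi[of e e' q q'] assms by (auto simp: u_link_def)
  with False show ?thesis
    by (intro that[of 0 pi]) auto
qed

lemma delta_nod_min_attained:
  assumes "0 < q'" "0 < e'" "e' < 1" "0 < q" "0 \<le> e" "e \<le> 1"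
  obtains w w' where "0 \<le> w" "w \<le> pi / 2" "0 \<le> w'" "w' \<le> pi"
    "delta_nod q e w q' e' w' = max 0 (max (l_int q e q' e') (ereal (l_ext q e q' e')))"
proof (cases "q \<le> Q_prime q' e' \<and> (e \<noteq> 1 \<longrightarrow> q' \<le> q * (1 + e) / (1 - e))")
  case True
  then have "max 0 (max (l_int q e q' e') (ereal (l_ext q e q' e'))) = 0"
    by (auto simp: max_l_int_l_ext_eq lower_nodal_bound_def)
  with True show ?thesis
    using delta_nod_zero_attained[OF assms] that by metis
next
  case False
  have "q' \<le> Q_prime q' e'" "e \<noteq> 1 \<Longrightarrow> q \<le> q * (1 + e) / (1 - e)"
    using conic_radius_bounds[of q' e' 1] conic_radius_bounds[of q e 1] assms
    by (auto simp: Q_prime_def)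
  then have "delta_nod q e 0 q' e' pi = ereal (lower_nodal_bound q e q' e')"
    using delta_nod_0_pi[of e e' q q'] assms False unfolding lower_nodal_bound_def
    by (cases "e = 1") (auto simp del: ereal_max simp: max_def)
  then have "delta_nod q e 0 q' e' pi = max 0 (max (l_int q e q' e') (ereal (l_ext q e q' e')))"
    unfolding max_l_int_l_ext_eq .
  then show ?thesis
    by (intro that[of 0 pi]) auto
qed

theorem proposition3:
  fixes q' e' qmax q e :: real
  assumes "q' > 0" and "0 < e'" and "e' < 1" and "qmax > 0"
    and "0 < q" and "q \<le> qmax" and "0 \<le> e" and "e \<le> 1"
  defines "S \<equiv> {delta_nod q e w q' e' w' | w w'. 0 \<le> w \<and> w \<le> pi / 2 \<and> 0 \<le> w' \<and> w' \<le> pi}"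
  shows "(max 0 (max (l_int q e q' e') (ereal (l_ext q e q' e'))) \<in> S \<and>
          (\<forall>x\<in>S. max 0 (max (l_int q e q' e') (ereal (l_ext q e q' e'))) \<le> x)) \<and>
         (ereal (max (u_link q e q' e') \<bar>p_prime q' e' - q * (1 + e)\<bar>) \<in> S \<and>
          (\<forall>x\<in>S. x \<le> ereal (max (u_link q e q' e') \<bar>p_prime q' e' - q * (1 + e)\<bar>)))"
proof -
  note hyps = \<open>q' > 0\<close> \<open>0 < e'\<close> \<open>e' < 1\<close> \<open>0 < q\<close> \<open>0 \<le> e\<close> \<open>e \<le> 1\<close>
  obtain w w' where "0 \<le> w" "w \<le> pi / 2" "0 \<le> w'" "w' \<le> pi"
    "delta_nod q e w q' e' w' = max 0 (max (l_int q e q' e') (ereal (l_ext q e q' e')))"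
    using delta_nod_min_attained[OF hyps] .
  then have min_in: "max 0 (max (l_int q e q' e') (ereal (l_ext q e q' e'))) \<in> S"
    unfolding S_def by force
  obtain v v' where "0 \<le> v" "v \<le> pi / 2" "0 \<le> v'" "v' \<le> pi"
    "delta_nod q e v q' e' v' = ereal (max (u_link q e q' e') \<bar>p_prime q' e' - q * (1 + e)\<bar>)"
    using delta_nod_max_attained[OF hyps] .
  then have max_in: "ereal (max (u_link q e q' e') \<bar>p_prime q' e' - q * (1 + e)\<bar>) \<in> S"
    unfolding S_def by force
  show ?thesis
    using min_in max_in delta_nod_bounds[OF hyps] unfolding S_def by blast
qed

end
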